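(* There exist smooth real hypersurfaces $M$ in $\mathbb{C}^4$ with $0\in M$ for which $\Delta_2(M,0)<\operatorname{gen.val}_{S\in G^3_0}\Delta_1(M\cap S,0)$. For instance, for $M=\{\operatorname{Re}(z_4)+|z_1^3-z_3z_2|^2+|z_2|^4=0\}$ one has $\Delta_2(M,0)=6$ while the generic value of $\Delta_1(M\cap S,0)$ over $S\in G^3_0$ is $8$.
   Context: For the germ $(M,p)$ of a smooth real hypersurface in $\mathbb{C}^n$, let $r_p$ be a generator of the ideal of germs at $p$ of smooth functions vanishing on $M$. $\Gamma_p$ is the set of non-constant germs of holomorphic maps $z\colon(\mathbb{C},0)\to(\mathbb{C}^n,p)$, $v(z)$ the order of vanishing of $z-p$ at $0$ and $v(r_p\circ z)$ the order of vanishing at $0$ of the smooth function $r_p\circ z$. D'Angelo's 1-type is $\Delta_1(M,p)=\sup_{z\in\Gamma_p}\frac{v(r_p\circ z)}{v(z)}$. For $q\in\{1,\dots,n\}$, let $G^{n-q+1}_p$ be the set of $(n-q+1)$-dimensional complex affine subspaces of $\mathbb{C}^n$ through $p$; $\Delta_q(M,p)=\inf_{S\in G^{n-q+1}_p}\Delta_1(M\cap S,p)$, where $M\cap S$ is regarded as a germ of real hypersurface in $S\cong\mathbb{C}^{n-q+1}$. The generic value over $S\in G^{n-q+1}_p$ of a quantity is the value it takes for all $S$ in some non-empty Zariski open subset of $G^{n-q+1}_p$. *)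

theory Defs
  imports "HOL-Analysis.Analysis" "HOL-Library.Numeral_Type"
begin

text \<open>For smooth g this is the degree of the first non-zero Taylor term.  For a vector-valued
  map we apply it to the norm.\<close>
definition vorder :: "(complex \<Rightarrow> real) \<Rightarrow> enat" where
  "vorder g = Sup {enat k | k. \<exists>C>0. \<exists>e>0. \<forall>t. cmod t < e \<longrightarrow> \<bar>g t\<bar> \<le> C * cmod t ^ k}"

definition Gamma_in :: "(complex^'n::finite) set \<Rightarrow> complex^'n \<Rightarrow> (complex \<Rightarrow> complex^'n) set" where
  "Gamma_in S p = {z. z 0 = p
      \<and> (\<exists>e>0. \<forall>i. (\<lambda>t. z t $ i) holomorphic_on ball 0 e)
      \<and> \<not> (\<forall>\<^sub>F t in nhds 0. z t = p)
      \<and> (\<forall>\<^sub>F t in nhds 0. z t \<in> S)}"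

text \<open>D'Angelo 1-type of the germ at p of M \<inter> S, where M = {r = 0}, r a defining function
  (generator of the ideal), and holomorphic curves are taken inside S.\<close>
definition Delta1_on :: "(complex^'n::finite \<Rightarrow> real) \<Rightarrow> (complex^'n) set \<Rightarrow> complex^'n \<Rightarrow> ereal" where
  "Delta1_on r S p = (SUP z \<in> Gamma_in S p.
       ereal_of_enat (vorder (\<lambda>t. r (z t))) / ereal_of_enat (vorder (\<lambda>t. norm (z t - p))))"

definition Delta1 :: "(complex^'n::finite \<Rightarrow> real) \<Rightarrow> complex^'n \<Rightarrow> ereal" where
  "Delta1 r p = Delta1_on r UNIV p"

definition Gr :: "nat \<Rightarrow> complex^'n::finite \<Rightarrow> (complex^'n) set set" where
  "Gr d p = {(\<lambda>v. p + v) ` V | V. vec.subspace V \<and> vec.dim V = d}"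

definition Delta :: "nat \<Rightarrow> (complex^'n::finite \<Rightarrow> real) \<Rightarrow> complex^'n \<Rightarrow> ereal" where
  "Delta q r p = (INF S \<in> Gr (CARD('n) - q + 1) p. Delta1_on r S p)"

text \<open>Polynomial functions of d-frames F : {..<d} -> C^n (polynomials in the d*n entries).\<close>
definition frame_poly :: "nat \<Rightarrow> ((nat \<Rightarrow> complex^'n::finite) \<Rightarrow> complex) \<Rightarrow> bool" where
  "frame_poly d P \<longleftrightarrow> (\<exists>c :: (nat \<times> 'n \<Rightarrow> nat) \<Rightarrow> complex.
      finite {\<alpha>. c \<alpha> \<noteq> 0}
    \<and> (\<forall>\<alpha>. c \<alpha> \<noteq> 0 \<longrightarrow> (\<forall>i j. d \<le> i \<longrightarrow> \<alpha> (i, j) = 0))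
    \<and> (\<forall>F. P F = (\<Sum>\<alpha>\<in>{\<alpha>. c \<alpha> \<noteq> 0}.
                   c \<alpha> * (\<Prod>ij\<in>{..<d} \<times> UNIV. (F (fst ij) $ snd ij) ^ \<alpha> ij))))"

text \<open>A property Q of elements of Gr d p holds generically, i.e. on a non-empty Zariski open
  subset of Gr d p.  Equivalently (the frame map to the Grassmannian is a surjective open
  morphism from an irreducible variety): there is a non-zero polynomial P in the entries of
  d-frames such that Q holds for p + span F whenever F is a linearly independent d-frame with
  P F \<noteq> 0.\<close>
definition holds_generically :: "nat \<Rightarrow> complex^'n::finite \<Rightarrow> ((complex^'n) set \<Rightarrow> bool) \<Rightarrow> bool" where
  "holds_generically d p Q \<longleftrightarrow> (\<exists>P. frame_poly d P \<and> (\<exists>F. P F \<noteq> 0) \<and>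
      (\<forall>F. P F \<noteq> 0 \<and> inj_on F {..<d} \<and> vec.independent (F ` {..<d})
            \<longrightarrow> Q ((\<lambda>v. p + v) ` vec.span (F ` {..<d}))))"

definition generic_value_is :: "nat \<Rightarrow> complex^'n::finite \<Rightarrow> ((complex^'n) set \<Rightarrow> 'b) \<Rightarrow> 'b \<Rightarrow> bool" where
  "generic_value_is d p f a \<longleftrightarrow> holds_generically d p (\<lambda>S. f S = a)"

definition r_ex :: "complex^4 \<Rightarrow> real" where
  "r_ex z = Re (z$4) + (cmod (z$1 ^ 3 - z$3 * z$2))\<^sup>2 + (cmod (z$2)) ^ 4"

end

(*
  Along a curve z whose components vanish to minimal order m, choose a ray on which the
  leading term of z4 is positive.  There r_ex dominates each of Re z4, |z2|^4 and
  |z1^3 - z3 z2|^2, so the 1-type of M \<inter> S is at most N once one of these vanishes to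
  order at most N m along every curve in S.  On the hyperplane z3 = 0 one of z1, z2, z4 has
  order m, giving N = 6.  On a hyperplane a1 z1 + ... + a4 z4 = 0 with a1 a3 \<noteq> 0, either
  z2 has order at most 2m, or z4 has order at most m, or z1 has order m while z3 z2 has
  order above 3m; this gives N = 8.  Conversely, every 3-space contains a line in
  z2 = z4 = 0, along which r_ex vanishes to order at least 6, and a 3-space in such a
  hyperplane contains a parabola (t, c t^2, a t + b t^2, 0) with a c = 1, along which the
  cubic terms cancel and r_ex vanishes to order 8.  The condition a1 a3 \<noteq> 0 is
  polynomial in a spanning frame.
*)

theory Submission
  imports Defs "HOL-Complex_Analysis.Conformal_Mappings"
begin

section \<open>Vanishing orders of germs at the origin\<close>

definition has_order_ge :: "nat \<Rightarrow> (complex \<Rightarrow> complex) \<Rightarrow> bool" where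
  "has_order_ge k g \<longleftrightarrow> (\<exists>h. isCont h 0 \<and> (\<forall>\<^sub>F t in nhds 0. g t = t ^ k * h t))"

definition has_order :: "nat \<Rightarrow> (complex \<Rightarrow> complex) \<Rightarrow> bool" where
  "has_order k g \<longleftrightarrow> (\<exists>h. isCont h 0 \<and> h 0 \<noteq> 0 \<and> (\<forall>\<^sub>F t in nhds 0. g t = t ^ k * h t))"

lemma has_order_imp_ge: "has_order k g \<Longrightarrow> has_order_ge k g"
  unfolding has_order_def has_order_ge_def by blast

lemma has_order_ge_mono:
  assumes "has_order_ge k g" "j \<le> k"
  shows "has_order_ge j g"
proof -
  obtain h where h: "isCont h 0" "\<forall>\<^sub>F t in nhds 0. g t = t ^ k * h t"
    using assms(1) unfolding has_order_ge_def by blast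
  have "\<forall>\<^sub>F t in nhds 0. g t = t ^ j * (t ^ (k - j) * h t)"
    using h(2) by eventually_elim (use assms(2) in \<open>simp flip: mult.assoc power_add\<close>)
  moreover have "isCont (\<lambda>t. t ^ (k - j) * h t) 0"
    using h(1) by (intro continuous_intros)
  ultimately show ?thesis
    unfolding has_order_ge_def by blast
qed

lemma has_order_ge_if_eventually_zero:
  "\<forall>\<^sub>F t in nhds 0. g t = 0 \<Longrightarrow> has_order_ge k g"
  unfolding has_order_ge_def by (rule exI[of _ "\<lambda>_. 0"]) auto

lemma has_order_ge_cong:
  assumes "has_order_ge k g" "\<forall>\<^sub>F t in nhds 0. f t = g t"
  shows "has_order_ge k f"
proof -
  obtain h where "isCont h 0" "\<forall>\<^sub>F t in nhds 0. g t = t ^ k * h t"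
    using assms(1) unfolding has_order_ge_def by blast
  moreover from this(2) assms(2) have "\<forall>\<^sub>F t in nhds 0. f t = t ^ k * h t"
    by eventually_elim simp
  ultimately show ?thesis
    unfolding has_order_ge_def by blast
qed

lemma has_order_cong:
  assumes "has_order k g" "\<forall>\<^sub>F t in nhds 0. f t = g t"
  shows "has_order k f"
proof -
  obtain h where "isCont h 0" "h 0 \<noteq> 0" "\<forall>\<^sub>F t in nhds 0. g t = t ^ k * h t"
    using assms(1) unfolding has_order_def by blast
  moreover from this(3) assms(2) have "\<forall>\<^sub>F t in nhds 0. f t = t ^ k * h t"
    by eventually_elim simp
  ultimately show ?thesis
    unfolding has_order_def by blast
qed

lemma has_order_not_ge_Suc:
  assumes "has_order k g"
  shows "\<not> has_order_ge (Suc k) g"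
proof
  assume "has_order_ge (Suc k) g"
  then obtain h2 where h2: "isCont h2 0" "\<forall>\<^sub>F t in nhds 0. g t = t ^ Suc k * h2 t"
    unfolding has_order_ge_def by blast
  obtain h1 where h1: "isCont h1 0" "h1 0 \<noteq> 0" "\<forall>\<^sub>F t in nhds 0. g t = t ^ k * h1 t"
    using assms unfolding has_order_def by blast
  have "\<forall>\<^sub>F t in at 0. h1 t = t * h2 t"
    using h1(3) h2(2) unfolding eventually_at_filter by eventually_elim auto
  moreover have "((\<lambda>t. t * h2 t) \<longlongrightarrow> 0 * h2 0) (at 0)"
    using h2(1) by (intro tendsto_intros) (simp add: isCont_def)
  ultimately have "(h1 \<longlongrightarrow> 0) (at 0)"
    by (simp add: tendsto_cong)
  with h1(1) have "h1 0 = 0"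
    by (simp add: isCont_def LIM_unique)
  with h1(2) show False ..
qed

lemma has_order_le_if_ge:
  assumes "has_order k g" "has_order_ge j g"
  shows "j \<le> k"
  using has_order_not_ge_Suc[OF assms(1)] has_order_ge_mono[OF assms(2)]
  by (metis not_less_eq_eq)

lemma has_order_unique: "has_order k g \<Longrightarrow> has_order l g \<Longrightarrow> k = l"
  by (meson antisym has_order_imp_ge has_order_le_if_ge)

lemma has_order_pos: "has_order k g \<Longrightarrow> g 0 = 0 \<Longrightarrow> 0 < k"
  unfolding has_order_def by (force dest: eventually_nhds_x_imp_x)

lemma has_order_ge_mult:
  assumes "has_order_ge k f" "has_order_ge l g"
  shows "has_order_ge (k + l) (\<lambda>t. f t * g t)"
proof -
  obtain h1 h2 where "isCont h1 0" "\<forall>\<^sub>F t in nhds 0. f t = t ^ k * h1 t"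
    and "isCont h2 0" "\<forall>\<^sub>F t in nhds 0. g t = t ^ l * h2 t"
    using assms unfolding has_order_ge_def by blast
  then show ?thesis
    unfolding has_order_ge_def
    by (intro exI[of _ "\<lambda>t. h1 t * h2 t"] conjI continuous_intros)
       (auto elim: eventually_elim2 simp: power_add algebra_simps)
qed

lemma has_order_mult:
  assumes "has_order k f" "has_order l g"
  shows "has_order (k + l) (\<lambda>t. f t * g t)"
proof -
  obtain h1 h2 where "isCont h1 0" "h1 0 \<noteq> 0" "\<forall>\<^sub>F t in nhds 0. f t = t ^ k * h1 t"
    and "isCont h2 0" "h2 0 \<noteq> 0" "\<forall>\<^sub>F t in nhds 0. g t = t ^ l * h2 t"
    using assms unfolding has_order_def by blast
  then show ?thesis
    unfolding has_order_def
    by (intro exI[of _ "\<lambda>t. h1 t * h2 t"] conjI continuous_intros)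
       (auto elim: eventually_elim2 simp: power_add algebra_simps)
qed

lemma has_order_power: "has_order k g \<Longrightarrow> has_order (n * k) (\<lambda>t. g t ^ n)"
proof (induction n)
  case 0
  show ?case
    unfolding has_order_def by (intro exI[of _ "\<lambda>_. 1"]) auto
next
  case (Suc n)
  then show ?case
    using has_order_mult[OF Suc.prems Suc.IH] by (simp add: add.commute)
qed

lemma has_order_ge_cmult:
  assumes "has_order_ge k f"
  shows "has_order_ge k (\<lambda>t. c * f t)"
proof -
  obtain h where "isCont h 0" "\<forall>\<^sub>F t in nhds 0. f t = t ^ k * h t"
    using assms unfolding has_order_ge_def by blast
  then show ?thesis
    unfolding has_order_ge_def
    by (intro exI[of _ "\<lambda>t. c * h t"] conjI continuous_intros)
       (auto elim: eventually_mono simp: algebra_simps)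
qed

lemma has_order_ge_add:
  assumes "has_order_ge k f" "has_order_ge k g"
  shows "has_order_ge k (\<lambda>t. f t + g t)"
proof -
  obtain h1 h2 where "isCont h1 0" "\<forall>\<^sub>F t in nhds 0. f t = t ^ k * h1 t"
    and "isCont h2 0" "\<forall>\<^sub>F t in nhds 0. g t = t ^ k * h2 t"
    using assms unfolding has_order_ge_def by blast
  then show ?thesis
    unfolding has_order_ge_def
    by (intro exI[of _ "\<lambda>t. h1 t + h2 t"] conjI continuous_intros)
       (auto elim: eventually_elim2 simp: algebra_simps)
qed

lemma has_order_diff_higher:
  assumes "has_order k f" "has_order_ge (Suc k) g"
  shows "has_order k (\<lambda>t. f t - g t)"
proof -
  obtain h1 h2 where "isCont h1 0" "h1 0 \<noteq> 0" "\<forall>\<^sub>F t in nhds 0. f t = t ^ k * h1 t"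
    and "isCont h2 0" "\<forall>\<^sub>F t in nhds 0. g t = t ^ Suc k * h2 t"
    using assms unfolding has_order_def has_order_ge_def by blast
  then show ?thesis
    unfolding has_order_def
    by (intro exI[of _ "\<lambda>t. h1 t - t * h2 t"] conjI continuous_intros)
       (auto elim: eventually_elim2 simp: algebra_simps)
qed

lemma has_order_lower_bound:
  assumes "has_order k g"
  obtains c where "c > 0" "\<forall>\<^sub>F t in nhds 0. c * cmod t ^ k \<le> cmod (g t)"
proof -
  obtain h where h: "isCont h 0" "h 0 \<noteq> 0" "\<forall>\<^sub>F t in nhds 0. g t = t ^ k * h t"
    using assms unfolding has_order_def by blast
  have "((\<lambda>t. cmod (h t)) \<longlongrightarrow> cmod (h 0)) (nhds 0)"
    using h(1) by (intro tendsto_norm) (simp add: isCont_def tendsto_at_iff_tendsto_nhds)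
  then have "\<forall>\<^sub>F t in nhds 0. cmod (h 0) / 2 < cmod (h t)"
    using h(2) by (intro order_tendstoD(1)) auto
  with h(3) have "\<forall>\<^sub>F t in nhds 0. cmod (h 0) / 2 * cmod t ^ k \<le> cmod (g t)"
  proof eventually_elim
    case (elim t)
    then have "cmod (h 0) / 2 * cmod t ^ k \<le> cmod (h t) * cmod t ^ k"
      by (intro mult_right_mono) auto
    with elim(1) show ?case
      by (simp add: norm_mult norm_power mult.commute)
  qed
  with h(2) show ?thesis
    using that[of "cmod (h 0) / 2"] by simp
qed

lemma has_order_ge_upper_bound:
  assumes "has_order_ge k g"
  obtains C where "\<forall>\<^sub>F t in nhds 0. cmod (g t) \<le> C * cmod t ^ k"
proof -
  obtain h where h: "isCont h 0" "\<forall>\<^sub>F t in nhds 0. g t = t ^ k * h t"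
    using assms unfolding has_order_ge_def by blast
  have "((\<lambda>t. cmod (h t)) \<longlongrightarrow> cmod (h 0)) (nhds 0)"
    using h(1) by (intro tendsto_norm) (simp add: isCont_def tendsto_at_iff_tendsto_nhds)
  then have "\<forall>\<^sub>F t in nhds 0. cmod (h t) < cmod (h 0) + 1"
    by (intro order_tendstoD(2)) auto
  with h(2) have "\<forall>\<^sub>F t in nhds 0. cmod (g t) \<le> (cmod (h 0) + 1) * cmod t ^ k"
  proof eventually_elim
    case (elim t)
    then have "cmod (h t) * cmod t ^ k \<le> (cmod (h 0) + 1) * cmod t ^ k"
      by (intro mult_right_mono) auto
    with elim(1) show ?case
      by (simp add: norm_mult norm_power mult.commute)
  qed
  then show ?thesis
    by (rule that)
qed

lemma analytic_has_order_cases: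
  assumes "g analytic_on {0}"
  shows "(\<forall>\<^sub>F t in nhds 0. g t = 0) \<or> (\<exists>k. has_order k g)"
proof -
  obtain e where e: "e > 0" "g holomorphic_on ball 0 e"
    using assms unfolding analytic_on_def by blast
  have cont: "isCont g 0"
    using e by (meson centre_in_ball holomorphic_on_imp_continuous_on open_ball
        continuous_on_eq_continuous_at)
  show ?thesis
  proof (cases "g 0 = 0")
    case False
    then have "has_order 0 g"
      unfolding has_order_def using cont by auto
    then show ?thesis by blast
  next
    case True
    show ?thesis
    proof (cases "g constant_on ball 0 e")
      case True
      then have "\<forall>t\<in>ball 0 e. g t = 0"
        using \<open>g 0 = 0\<close> \<open>e > 0\<close> unfolding constant_on_def by (metis centre_in_ball)
      then show ?thesis
        unfolding eventually_nhds using \<open>e > 0\<close> by (meson centre_in_ball open_ball)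
    next
      case False
      obtain h r n where "0 < r" "h holomorphic_on ball 0 r"
        "\<And>w. w \<in> ball 0 r \<Longrightarrow> g w = w ^ n * h w" "\<And>w. w \<in> ball 0 r \<Longrightarrow> h w \<noteq> 0"
        using holomorphic_factor_zero_nonconstant[OF e(2) open_ball connected_ball _ \<open>g 0 = 0\<close> False]
          \<open>e > 0\<close> by (metis centre_in_ball diff_zero)
      then have "has_order n g"
        unfolding has_order_def eventually_nhds
        by (meson centre_in_ball holomorphic_on_imp_continuous_on open_ball
            continuous_on_eq_continuous_at)
      then show ?thesis by blast
    qed
  qed
qed

lemma analytic_has_order_le_or_ge:
  assumes "g analytic_on {0}"
  shows "(\<exists>k\<le>N. has_order k g) \<or> has_order_ge (Suc N) g"
  using analytic_has_order_cases[OF assms]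
  by (metis has_order_ge_if_eventually_zero has_order_ge_mono has_order_imp_ge not_less_eq_eq)

lemma analytic_has_order_or_ge_Suc:
  assumes "g analytic_on {0}" "has_order_ge m g"
  shows "has_order m g \<or> has_order_ge (Suc m) g"
  using analytic_has_order_le_or_ge[OF assms(1), of m] has_order_le_if_ge[OF _ assms(2)]
  by (metis le_antisym)

section \<open>Growth along rays\<close>

definition ray_lower_bound :: "complex \<Rightarrow> nat \<Rightarrow> (complex \<Rightarrow> real) \<Rightarrow> bool" where
  "ray_lower_bound \<omega> N g \<longleftrightarrow> (\<exists>c>0. \<forall>\<^sub>F s in at_right 0. c * s ^ N \<le> g (of_real s * \<omega>))"

lemma eventually_at_right_0_less_1: "\<forall>\<^sub>F s in at_right (0::real). 0 < s \<and> s < 1"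
  unfolding eventually_at_right_field by (intro exI[of _ 1]) auto

lemma eventually_along_ray:
  fixes \<omega> :: complex
  assumes "\<forall>\<^sub>F t in nhds 0. P t"
  shows "\<forall>\<^sub>F s in at_right 0. P (of_real s * \<omega>)"
proof -
  have "((\<lambda>s. of_real s * \<omega>) \<longlongrightarrow> 0) (at_right 0)"
    by (auto intro!: tendsto_eq_intros)
  then show ?thesis
    using assms by (simp add: filterlim_iff)
qed

lemma ray_lower_bound_mono:
  assumes "ray_lower_bound \<omega> K g" "K \<le> N"
    and "\<forall>\<^sub>F s in at_right 0. g (of_real s * \<omega>) \<le> h (of_real s * \<omega>)"
  shows "ray_lower_bound \<omega> N h"
proof -
  obtain c where c: "c > 0" "\<forall>\<^sub>F s in at_right 0. c * s ^ K \<le> g (of_real s * \<omega>)"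
    using assms(1) unfolding ray_lower_bound_def by blast
  from c(2) assms(3) eventually_at_right_0_less_1
  have "\<forall>\<^sub>F s in at_right 0. c * s ^ N \<le> h (of_real s * \<omega>)"
  proof eventually_elim
    case (elim s)
    then have "c * s ^ N \<le> c * s ^ K"
      using c(1) assms(2) by (intro mult_left_mono power_decreasing) auto
    with elim show ?case by linarith
  qed
  with c(1) show ?thesis
    unfolding ray_lower_bound_def by blast
qed

lemma has_order_ray_lower_bound:
  assumes "has_order k q" "cmod \<omega> = 1"
  shows "ray_lower_bound \<omega> (k * p) (\<lambda>t. cmod (q t) ^ p)"
proof -
  obtain c where c: "c > 0" "\<forall>\<^sub>F t in nhds 0. c * cmod t ^ k \<le> cmod (q t)"
    using has_order_lower_bound[OF assms(1)] by blast
  from eventually_along_ray[OF c(2), of \<omega>] eventually_at_right_less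
  have "\<forall>\<^sub>F s in at_right 0. c ^ p * s ^ (k * p) \<le> cmod (q (of_real s * \<omega>)) ^ p"
  proof eventually_elim
    case (elim s)
    then have "(c * s ^ k) ^ p \<le> cmod (q (of_real s * \<omega>)) ^ p"
      using c(1) assms(2) by (intro power_mono) (auto simp: norm_mult)
    then show ?case
      by (simp add: power_mult_distrib power_mult)
  qed
  with c(1) show ?thesis
    unfolding ray_lower_bound_def by (intro exI[of _ "c ^ p"]) auto
qed

lemma has_order_positive_ray:
  assumes "has_order k g" "0 < k"
  obtains \<omega> where "cmod \<omega> = 1" "ray_lower_bound \<omega> k (\<lambda>t. Re (g t))"
proof -
  obtain h where h: "isCont h 0" "h 0 \<noteq> 0" "\<forall>\<^sub>F t in nhds 0. g t = t ^ k * h t"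
    using assms(1) unfolding has_order_def by blast
  obtain \<omega> where \<omega>: "of_real (cmod (h 0)) / h 0 = \<omega> ^ k"
    using exists_complex_root assms(2) by (metis less_numeral_extra(3))
  then have "cmod \<omega> ^ k = 1"
    using h(2) by (metis norm_divide norm_of_real norm_power abs_norm_cancel divide_self norm_eq_zero)
  then have unit: "cmod \<omega> = 1"
    using assms(2) power_eq_iff_eq_base[of k "cmod \<omega>" 1] by simp
  have lead: "\<omega> ^ k * h 0 = of_real (cmod (h 0))"
    using h(2) by (simp flip: \<omega>)
  have "((\<lambda>s. h (of_real s * \<omega>)) \<longlongrightarrow> h 0) (at_right 0)"
    using h(1) by (intro isCont_tendsto_compose[of _ h]) (auto intro!: tendsto_eq_intros)
  then have "\<forall>\<^sub>F s in at_right 0. dist (h (of_real s * \<omega>)) (h 0) < cmod (h 0) / 2"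
    using h(2) by (intro tendstoD) auto
  with eventually_along_ray[OF h(3), of \<omega>] eventually_at_right_less
  have "\<forall>\<^sub>F s in at_right 0. cmod (h 0) / 2 * s ^ k \<le> Re (g (of_real s * \<omega>))"
  proof eventually_elim
    case (elim s)
    define \<delta> where "\<delta> = Re (\<omega> ^ k * (h (of_real s * \<omega>) - h 0))"
    have "g (of_real s * \<omega>) = of_real (s ^ k) * (\<omega> ^ k * h (of_real s * \<omega>))"
      using elim(1) by (simp add: power_mult_distrib)
    also have "\<omega> ^ k * h (of_real s * \<omega>) = of_real (cmod (h 0)) + \<omega> ^ k * (h (of_real s * \<omega>) - h 0)"
      using lead by (simp add: algebra_simps)
    finally have "Re (g (of_real s * \<omega>)) = (cmod (h 0) + \<delta>) * s ^ k"
      by (simp add: \<delta>_def mult.commute)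
    moreover have "\<bar>\<delta>\<bar> < cmod (h 0) / 2"
      using elim(3) abs_Re_le_cmod[of "\<omega> ^ k * (h (of_real s * \<omega>) - h 0)"]
      by (simp add: \<delta>_def norm_mult norm_power unit dist_norm)
    then have "cmod (h 0) / 2 * s ^ k \<le> (cmod (h 0) + \<delta>) * s ^ k"
      using elim(2) by (intro mult_right_mono) auto
    ultimately show ?case
      by simp
  qed
  then have "ray_lower_bound \<omega> k (\<lambda>t. Re (g t))"
    unfolding ray_lower_bound_def using h(2) by (intro exI[of _ "cmod (h 0) / 2"]) auto
  with unit show ?thesis
    by (rule that)
qed

lemma analytic_positive_ray:
  assumes "g analytic_on {0}" "g 0 = 0"
  obtains \<omega> where "cmod \<omega> = 1" "\<forall>\<^sub>F s in at_right 0. 0 \<le> Re (g (of_real s * \<omega>))"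
    "\<And>k. has_order k g \<Longrightarrow> ray_lower_bound \<omega> k (\<lambda>t. Re (g t))"
  using analytic_has_order_cases[OF assms(1)]
proof
  assume zero: "\<forall>\<^sub>F t in nhds 0. g t = 0"
  have "\<forall>\<^sub>F s in at_right 0. 0 \<le> Re (g (of_real s * 1))"
    using eventually_along_ray[OF zero, of 1] by (rule eventually_mono) simp
  moreover have "\<not> has_order k g" for k
    using has_order_not_ge_Suc has_order_ge_if_eventually_zero[OF zero] by blast
  ultimately show ?thesis
    using that[of 1] by simp
next
  assume "\<exists>k. has_order k g"
  then obtain k0 where k0: "has_order k0 g" ..
  then obtain \<omega> where \<omega>: "cmod \<omega> = 1" "ray_lower_bound \<omega> k0 (\<lambda>t. Re (g t))"
    using has_order_positive_ray has_order_pos[OF k0 assms(2)] by metis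
  then obtain c where c: "c > 0" "\<forall>\<^sub>F s in at_right 0. c * s ^ k0 \<le> Re (g (of_real s * \<omega>))"
    unfolding ray_lower_bound_def by blast
  from c(2) eventually_at_right_less
  have "\<forall>\<^sub>F s in at_right 0. 0 \<le> Re (g (of_real s * \<omega>))"
    by eventually_elim (use c(1) in \<open>meson order_trans zero_le_mult_iff zero_le_power less_imp_le\<close>)
  moreover have "ray_lower_bound \<omega> k (\<lambda>t. Re (g t))" if "has_order k g" for k
    using \<omega>(2) has_order_unique[OF k0 that] by simp
  ultimately show ?thesis
    using that \<omega>(1) by blast
qed

lemma vorder_ge:
  assumes "\<forall>\<^sub>F t in nhds 0. \<bar>g t\<bar> \<le> C * cmod t ^ k"
  shows "enat k \<le> vorder g"
proof -
  obtain e where "e > 0" "\<forall>t. cmod t < e \<longrightarrow> \<bar>g t\<bar> \<le> C * cmod t ^ k"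
    using assms unfolding eventually_nhds_metric by (auto simp: dist_norm)
  then have "\<forall>t. cmod t < e \<longrightarrow> \<bar>g t\<bar> \<le> max C 1 * cmod t ^ k"
    by (meson max.cobounded1 mult_right_mono norm_ge_zero order_trans zero_le_power)
  moreover have "max C 1 > 0"
    by simp
  ultimately show ?thesis
    using \<open>e > 0\<close> unfolding vorder_def by (intro Sup_upper) blast
qed

lemma vorder_le_if_ray_lower_bound:
  assumes "cmod \<omega> = 1" "ray_lower_bound \<omega> k g"
  shows "vorder g \<le> enat k"
  unfolding vorder_def
proof (rule Sup_least)
  fix x assume "x \<in> {enat j | j. \<exists>C>0. \<exists>e>0. \<forall>t. cmod t < e \<longrightarrow> \<bar>g t\<bar> \<le> C * cmod t ^ j}"
  then obtain j C e where x: "x = enat j" "C > 0" "e > 0"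
    and upper: "\<forall>t. cmod t < e \<longrightarrow> \<bar>g t\<bar> \<le> C * cmod t ^ j"
    by blast
  obtain c where c: "c > 0" "\<forall>\<^sub>F s in at_right 0. c * s ^ k \<le> g (of_real s * \<omega>)"
    using assms(2) unfolding ray_lower_bound_def by blast
  show "x \<le> enat k"
  proof (rule ccontr)
    assume "\<not> x \<le> enat k"
    then have "Suc k \<le> j"
      using x(1) by simp
    have "((\<lambda>s. C * s) \<longlongrightarrow> 0) (at_right (0::real))"
      by (auto intro!: tendsto_eq_intros)
    then have "\<forall>\<^sub>F s in at_right 0. C * s < c"
      using c(1) by (intro order_tendstoD(2)) auto
    moreover have "\<forall>\<^sub>F s in at_right (0::real). s < e"
      using \<open>e > 0\<close> unfolding eventually_at_right_field by blast
    ultimately have "\<forall>\<^sub>F s in at_right (0::real). False"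
      using c(2) eventually_at_right_0_less_1
    proof eventually_elim
      case (elim s)
      have "c * s ^ k \<le> C * s ^ j"
        using elim upper[rule_format, of "of_real s * \<omega>"] assms(1) by (simp add: norm_mult)
      also have "\<dots> \<le> C * s ^ Suc k"
        using elim \<open>Suc k \<le> j\<close> x(2) by (intro mult_left_mono power_decreasing) auto
      also have "\<dots> = (C * s) * s ^ k"
        by simp
      also have "\<dots> < c * s ^ k"
        using elim by (intro mult_strict_right_mono) auto
      finally show False by simp
    qed
    then show False
      by (simp add: trivial_limit_at_right_real)
  qed
qed

section \<open>Holomorphic curves and the 1-type\<close>

definition curve_order :: "nat \<Rightarrow> (complex \<Rightarrow> complex ^ 'n::finite) \<Rightarrow> bool" where
  "curve_order m z \<longleftrightarrow> (\<forall>i. has_order_ge m (\<lambda>t. z t $ i)) \<and> (\<exists>i. has_order m (\<lambda>t. z t $ i))"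

lemma curve_order_not_ge_Suc:
  "curve_order m z \<Longrightarrow> \<not> (\<forall>i. has_order_ge (Suc m) (\<lambda>t. z t $ i))"
  unfolding curve_order_def using has_order_not_ge_Suc by blast

lemma curve_order_not_eventually_zero:
  assumes "curve_order m z"
  shows "\<not> (\<forall>\<^sub>F t in nhds 0. z t = 0)"
proof
  assume "\<forall>\<^sub>F t in nhds 0. z t = 0"
  then have "has_order_ge (Suc m) (\<lambda>t. z t $ i)" for i
    by (intro has_order_ge_if_eventually_zero) (auto elim: eventually_mono)
  with curve_order_not_ge_Suc[OF assms] show False
    by blast
qed

lemma Gamma_in_analytic:
  assumes "z \<in> Gamma_in S p"
  shows "(\<lambda>t. z t $ i) analytic_on {0}"
  using assms unfolding Gamma_in_def analytic_on_def by blast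

lemma Gamma_in_curve_order:
  assumes "z \<in> Gamma_in S 0"
  obtains m where "0 < m" "curve_order m z"
proof -
  have analytic: "(\<lambda>t. z t $ i) analytic_on {0}" for i
    using Gamma_in_analytic[OF assms] .
  have "\<not> (\<forall>i. \<forall>\<^sub>F t in nhds 0. z t $ i = 0)"
  proof
    assume "\<forall>i. \<forall>\<^sub>F t in nhds 0. z t $ i = 0"
    then have "\<forall>\<^sub>F t in nhds 0. z t = 0"
      by (simp add: vec_eq_iff eventually_all_finite)
    with assms show False
      unfolding Gamma_in_def by blast
  qed
  then have "\<exists>k i. has_order k (\<lambda>t. z t $ i)"
    using analytic_has_order_cases[OF analytic] by blast
  define m where "m = (LEAST k. \<exists>i. has_order k (\<lambda>t. z t $ i))"
  then obtain i0 where i0: "has_order m (\<lambda>t. z t $ i0)"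
    using LeastI_ex[OF \<open>\<exists>k i. has_order k (\<lambda>t. z t $ i)\<close>] by blast
  have "has_order_ge m (\<lambda>t. z t $ i)" for i
    using analytic_has_order_cases[OF analytic, of i]
  proof
    assume "\<exists>k. has_order k (\<lambda>t. z t $ i)"
    then obtain k where k: "has_order k (\<lambda>t. z t $ i)" ..
    then have "m \<le> k"
      unfolding m_def by (blast intro: Least_le)
    with k show ?thesis
      using has_order_ge_mono has_order_imp_ge by blast
  qed (rule has_order_ge_if_eventually_zero)
  moreover have "z 0 $ i0 = 0"
    using assms unfolding Gamma_in_def by simp
  then have "0 < m"
    using has_order_pos i0 by blast
  ultimately show ?thesis
    using that i0 unfolding curve_order_def by blast
qed

lemma vorder_norm_curve_order:
  fixes z :: "complex \<Rightarrow> complex ^ 'n::finite"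
  assumes "curve_order m z"
  shows "vorder (\<lambda>t. norm (z t)) = enat m"
proof (rule antisym)
  obtain i where "has_order m (\<lambda>t. z t $ i)"
    using assms unfolding curve_order_def by blast
  then have "ray_lower_bound 1 (m * 1) (\<lambda>t. cmod (z t $ i) ^ 1)"
    by (rule has_order_ray_lower_bound) simp
  then have "ray_lower_bound 1 m (\<lambda>t. norm (z t))"
    by (rule ray_lower_bound_mono) (simp_all add: Finite_Cartesian_Product.norm_nth_le)
  then show "vorder (\<lambda>t. norm (z t)) \<le> enat m"
    by (rule vorder_le_if_ray_lower_bound[rotated]) simp
next
  have "\<exists>C. \<forall>\<^sub>F t in nhds 0. cmod (z t $ i) \<le> C * cmod t ^ m" for i
  proof -
    have "has_order_ge m (\<lambda>t. z t $ i)"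
      using assms unfolding curve_order_def by blast
    then obtain C where "\<forall>\<^sub>F t in nhds 0. cmod (z t $ i) \<le> C * cmod t ^ m"
      by (rule has_order_ge_upper_bound)
    then show ?thesis ..
  qed
  then obtain C where "\<And>i. \<forall>\<^sub>F t in nhds 0. cmod (z t $ i) \<le> C i * cmod t ^ m"
    by metis
  then have "\<forall>\<^sub>F t in nhds 0. \<forall>i. cmod (z t $ i) \<le> C i * cmod t ^ m"
    by (simp add: eventually_all_finite)
  then have "\<forall>\<^sub>F t in nhds 0. \<bar>norm (z t)\<bar> \<le> (\<Sum>i\<in>UNIV. C i) * cmod t ^ m"
  proof eventually_elim
    case (elim t)
    have "norm (z t) \<le> (\<Sum>i\<in>UNIV. cmod (z t $ i))"
      unfolding norm_vec_def by (rule L2_set_le_sum) auto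
    also have "\<dots> \<le> (\<Sum>i\<in>UNIV. C i * cmod t ^ m)"
      using elim by (intro sum_mono) auto
    finally show ?case
      by (simp add: sum_distrib_right)
  qed
  then show "enat m \<le> vorder (\<lambda>t. norm (z t))"
    by (rule vorder_ge)
qed

lemma ereal_of_enat_divide_le:
  assumes "a \<le> enat (N * m)" "enat m \<le> b" "0 < m"
  shows "ereal_of_enat a / ereal_of_enat b \<le> ereal (real N)"
proof -
  obtain n where n: "a = enat n" "n \<le> N * m"
    using assms(1) by (cases a) auto
  show ?thesis
  proof (cases b)
    case infinity
    then show ?thesis
      using n by simp
  next
    case (enat d)
    then have "m \<le> d"
      using assms(2) by simp
    then have "n \<le> N * d"
      using n(2) by (meson le_trans mult_le_mono2)
    then have "real n \<le> real N * real d" "0 < d"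
      using \<open>m \<le> d\<close> assms(3) by (simp_all flip: of_nat_mult)
    then show ?thesis
      using n enat by (simp add: ereal_divide divide_le_eq)
  qed
qed

lemma Delta1_on_le_if_ray_lower_bounds:
  fixes r :: "complex ^ 'n::finite \<Rightarrow> real"
  assumes "\<And>z m. z \<in> Gamma_in S 0 \<Longrightarrow> curve_order m z \<Longrightarrow>
      \<exists>\<omega>. cmod \<omega> = 1 \<and> ray_lower_bound \<omega> (N * m) (\<lambda>t. r (z t))"
  shows "Delta1_on r S 0 \<le> ereal (real N)"
  unfolding Delta1_on_def
proof (rule SUP_least)
  fix z assume z: "z \<in> Gamma_in S 0"
  then obtain m where m: "0 < m" "curve_order m z"
    by (rule Gamma_in_curve_order)
  then obtain \<omega> where "cmod \<omega> = 1" "ray_lower_bound \<omega> (N * m) (\<lambda>t. r (z t))"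
    using assms z by blast
  then have "vorder (\<lambda>t. r (z t)) \<le> enat (N * m)"
    by (rule vorder_le_if_ray_lower_bound)
  then show "ereal_of_enat (vorder (\<lambda>t. r (z t))) / ereal_of_enat (vorder (\<lambda>t. norm (z t - 0)))
      \<le> ereal (real N)"
    using vorder_norm_curve_order[OF m(2)] m(1) by (intro ereal_of_enat_divide_le) simp_all
qed

lemma parabola_curve_order:
  fixes u v :: "complex ^ 'n::finite"
  assumes "u \<noteq> 0"
  shows "curve_order 1 (\<lambda>t. t *s u + t\<^sup>2 *s v)"
proof -
  have component: "(t *s u + t\<^sup>2 *s v) $ i = t ^ 1 * (u $ i + t * v $ i)" for t i
    by (simp add: power2_eq_square algebra_simps)
  have cont: "isCont (\<lambda>t. u $ i + t * v $ i) 0" for i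
    by (intro continuous_intros)
  have "has_order_ge 1 (\<lambda>t. (t *s u + t\<^sup>2 *s v) $ i)" for i
    unfolding has_order_ge_def component using cont by (intro exI[of _ "\<lambda>t. u $ i + t * v $ i"]) simp
  moreover obtain i where "u $ i \<noteq> 0"
    using assms by (metis vec_eq_iff zero_index)
  then have "has_order 1 (\<lambda>t. (t *s u + t\<^sup>2 *s v) $ i)"
    unfolding has_order_def component using cont by (intro exI[of _ "\<lambda>t. u $ i + t * v $ i"]) simp
  ultimately show ?thesis
    unfolding curve_order_def by blast
qed

lemma Delta1_on_ge_if_parabola:
  fixes r :: "complex ^ 'n::finite \<Rightarrow> real"
  assumes "vec.subspace S" "u \<in> S" "v \<in> S" "u \<noteq> 0"
    and "\<forall>\<^sub>F t in nhds 0. \<bar>r (t *s u + t\<^sup>2 *s v)\<bar> \<le> C * cmod t ^ N"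
  shows "ereal (real N) \<le> Delta1_on r S 0"
proof -
  define z where "z t = t *s u + t\<^sup>2 *s v" for t
  have order: "curve_order 1 z"
    unfolding z_def using assms(4) by (rule parabola_curve_order)
  have "z \<in> Gamma_in S 0"
    unfolding Gamma_in_def
  proof (intro CollectI conjI)
    show "z 0 = 0"
      by (simp add: z_def)
    show "\<exists>e>0. \<forall>i. (\<lambda>t. z t $ i) holomorphic_on ball 0 e"
      by (intro exI[of _ 1]) (simp add: z_def holomorphic_intros)
    show "\<forall>\<^sub>F t in nhds 0. z t \<in> S"
      unfolding z_def using assms(1-3) by (simp add: vec.subspace_add vec.subspace_scale)
    show "\<not> (\<forall>\<^sub>F t in nhds 0. z t = 0)"
      using order by (rule curve_order_not_eventually_zero)
  qed
  moreover have "enat N \<le> vorder (\<lambda>t. r (z t))"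
    using assms(5) unfolding z_def by (rule vorder_ge)
  then have "ereal (real N) \<le> ereal_of_enat (vorder (\<lambda>t. r (z t))) / ereal_of_enat (vorder (\<lambda>t. norm (z t - 0)))"
    using vorder_norm_curve_order[OF order]
    by (cases "vorder (\<lambda>t. r (z t))") (simp_all add: one_ereal_def [symmetric])
  ultimately show ?thesis
    unfolding Delta1_on_def by (auto intro: SUP_upper2)
qed

section \<open>Subspaces and coordinate planes\<close>

lemma Gr_0_iff: "V \<in> Gr d (0 :: complex ^ 'n::finite) \<longleftrightarrow> vec.subspace V \<and> vec.dim V = d"
  unfolding Gr_def by simp

lemma subspace_Int_nonzero:
  fixes S T :: "('a::field ^ 'n) set"
  assumes "vec.subspace S" "vec.subspace T" "CARD('n) < vec.dim S + vec.dim T"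
  obtains w where "w \<in> S" "w \<in> T" "w \<noteq> 0"
proof -
  have "vec.dim {x + y |x y. x \<in> S \<and> y \<in> T} + vec.dim (S \<inter> T) = vec.dim S + vec.dim T"
    using assms(1,2) by (rule vec.dim_sums_Int)
  moreover have "vec.dim {x + y |x y. x \<in> S \<and> y \<in> T} \<le> CARD('n)"
    by (rule dim_subset_UNIV_cart_gen)
  ultimately have "vec.dim (S \<inter> T) \<noteq> 0"
    using assms(3) by linarith
  then have "\<not> S \<inter> T \<subseteq> {0}"
    by simp
  then show ?thesis
    using that by blast
qed

lemma subspace_meets_coordinate_plane:
  fixes S :: "('a::field ^ 'n) set"
  assumes "vec.subspace S" "CARD('n) < vec.dim S + 2" "p \<noteq> q"
  obtains w where "w \<in> S" "w \<noteq> 0" "\<And>k. k \<noteq> p \<Longrightarrow> k \<noteq> q \<Longrightarrow> w $ k = 0"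
proof -
  define T where "T = {w :: 'a ^ 'n. \<forall>k. k \<noteq> p \<and> k \<noteq> q \<longrightarrow> w $ k = 0}"
  have "vec.subspace T"
    unfolding T_def vec.subspace_def by auto
  have "{axis p 1, axis q 1} \<subseteq> T"
    unfolding T_def by (auto simp: axis_def)
  moreover have "vec.independent {axis p (1::'a), axis q 1}"
    by (rule vec.independent_mono[OF independent_cart_basis]) (auto simp: cart_basis_def)
  ultimately have "card {axis p (1::'a), axis q 1} \<le> vec.dim T"
    by (intro vec.independent_card_le_dim)
  then have "2 \<le> vec.dim T"
    using assms(3) by (simp add: axis_eq_axis)
  then have "CARD('n) < vec.dim S + vec.dim T"
    using assms(2) by linarith
  then obtain w where "w \<in> S" "w \<in> T" "w \<noteq> 0"
    by (rule subspace_Int_nonzero[OF assms(1) \<open>vec.subspace T\<close>])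
  then show ?thesis
    using that unfolding T_def by blast
qed

lemma dim_coordinate_hyperplane:
  "vec.dim {w :: 'a::field ^ 'n. w $ k = 0} = CARD('n) - 1"
proof -
  define H where "H = {w :: 'a ^ 'n. w $ k = 0}"
  have "vec.subspace H"
    unfolding H_def vec.subspace_def by auto
  have "(\<lambda>j. axis j (1::'a)) ` (- {k}) \<subseteq> H"
    unfolding H_def by (auto simp: axis_def)
  moreover have "vec.independent ((\<lambda>j. axis j (1::'a)) ` (- {k}))"
    by (rule vec.independent_mono[OF independent_cart_basis]) (auto simp: cart_basis_def)
  ultimately have "card ((\<lambda>j. axis j (1::'a)) ` (- {k})) \<le> vec.dim H"
    by (intro vec.independent_card_le_dim)
  moreover have "card ((\<lambda>j. axis j (1::'a)) ` (- {k})) = CARD('n) - 1"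
    by (subst card_image) (auto simp: inj_on_def axis_eq_axis Compl_eq_Diff_UNIV card_Diff_singleton)
  moreover have "vec.dim H \<noteq> CARD('n)"
  proof
    assume "vec.dim H = CARD('n)"
    then have "vec.dim (UNIV :: ('a ^ 'n) set) \<le> vec.dim H"
      by (simp add: card_cart_basis)
    then have "vec.span H = vec.span UNIV"
      by (rule vec.dim_eq_span[rotated]) simp
    moreover have "vec.span H = H"
      using \<open>vec.subspace H\<close> by (rule vec.span_eq_iff[THEN iffD2])
    ultimately have "axis k 1 \<in> H"
      by simp
    then show False
      unfolding H_def by (simp add: axis_def)
  qed
  moreover have "vec.dim H \<le> CARD('n)"
    by (rule dim_subset_UNIV_cart_gen)
  ultimately show ?thesis
    unfolding H_def by linarith
qed

section \<open>Polynomials in the entries of a frame\<close>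

definition frame_monomial :: "nat \<Rightarrow> (nat \<times> 'n \<Rightarrow> nat) \<Rightarrow> (nat \<Rightarrow> complex ^ 'n::finite) \<Rightarrow> complex" where
  "frame_monomial d \<alpha> F = (\<Prod>ij\<in>{..<d} \<times> UNIV. (F (fst ij) $ snd ij) ^ \<alpha> ij)"

lemma frame_polyI:
  fixes P :: "(nat \<Rightarrow> complex ^ 'n::finite) \<Rightarrow> complex"
  assumes "finite A" "\<forall>\<alpha>\<in>A. \<forall>i j. d \<le> i \<longrightarrow> \<alpha> (i, j) = 0"
    and "\<And>F. P F = (\<Sum>\<alpha>\<in>A. c \<alpha> * frame_monomial d \<alpha> F)"
  shows "frame_poly d P"
proof -
  define c' where "c' \<alpha> = (if \<alpha> \<in> A then c \<alpha> else 0)" for \<alpha>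
  have support: "{\<alpha>. c' \<alpha> \<noteq> 0} \<subseteq> A"
    unfolding c'_def by auto
  have "P F = (\<Sum>\<alpha>\<in>{\<alpha>. c' \<alpha> \<noteq> 0}. c' \<alpha> * frame_monomial d \<alpha> F)" for F
  proof -
    have "(\<Sum>\<alpha>\<in>{\<alpha>. c' \<alpha> \<noteq> 0}. c' \<alpha> * frame_monomial d \<alpha> F) = (\<Sum>\<alpha>\<in>A. c' \<alpha> * frame_monomial d \<alpha> F)"
      by (rule sum.mono_neutral_left[OF assms(1) support]) auto
    then show ?thesis
      unfolding assms(3) c'_def by simp
  qed
  then show ?thesis
    unfolding frame_poly_def frame_monomial_def using finite_subset[OF support assms(1)] support assms(2)
    by (intro exI[of _ c']) auto
qed

lemma frame_polyE:
  fixes P :: "(nat \<Rightarrow> complex ^ 'n::finite) \<Rightarrow> complex"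
  assumes "frame_poly d P"
  obtains c A where "finite A" "\<forall>\<alpha>\<in>A. \<forall>i j. d \<le> i \<longrightarrow> \<alpha> (i, j) = 0"
    "\<And>F. P F = (\<Sum>\<alpha>\<in>A. c \<alpha> * frame_monomial d \<alpha> F)"
  using assms unfolding frame_poly_def frame_monomial_def by blast

lemma frame_poly_const: "frame_poly d (\<lambda>F :: nat \<Rightarrow> complex ^ 'n::finite. k)"
  by (rule frame_polyI[of "{\<lambda>_. 0}" _ _ "\<lambda>_. k"]) (auto simp: frame_monomial_def)

lemma frame_poly_entry:
  assumes "i < d"
  shows "frame_poly d (\<lambda>F :: nat \<Rightarrow> complex ^ 'n::finite. F i $ j)"
proof (rule frame_polyI[of "{\<lambda>ij. if ij = (i, j) then 1 else 0}" _ _ "\<lambda>_. 1"])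
  fix F :: "nat \<Rightarrow> complex ^ 'n"
  have "frame_monomial d (\<lambda>ij. if ij = (i, j) then 1 else 0) F
      = (\<Prod>ij\<in>{..<d} \<times> UNIV. if ij = (i, j) then F (fst ij) $ snd ij else 1)"
    unfolding frame_monomial_def by (intro prod.cong) auto
  also have "\<dots> = F i $ j"
    using assms by (subst prod.delta) auto
  finally show "F i $ j = (\<Sum>\<alpha>\<in>{\<lambda>ij. if ij = (i, j) then 1 else 0}. 1 * frame_monomial d \<alpha> F)"
    by simp
qed (use assms in auto)

lemma frame_poly_add:
  assumes "frame_poly d P" "frame_poly d Q"
  shows "frame_poly d (\<lambda>F. P F + Q F)"
proof -
  obtain c1 A1 where 1: "finite A1" "\<forall>\<alpha>\<in>A1. \<forall>i j. d \<le> i \<longrightarrow> \<alpha> (i, j) = 0"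
      "\<And>F. P F = (\<Sum>\<alpha>\<in>A1. c1 \<alpha> * frame_monomial d \<alpha> F)"
    using assms(1) by (elim frame_polyE) blast
  obtain c2 A2 where 2: "finite A2" "\<forall>\<alpha>\<in>A2. \<forall>i j. d \<le> i \<longrightarrow> \<alpha> (i, j) = 0"
      "\<And>F. Q F = (\<Sum>\<alpha>\<in>A2. c2 \<alpha> * frame_monomial d \<alpha> F)"
    using assms(2) by (elim frame_polyE) blast
  show ?thesis
  proof (rule frame_polyI[of "A1 \<union> A2"])
    fix F
    have "(\<Sum>\<alpha>\<in>A1 \<union> A2. ((if \<alpha> \<in> A1 then c1 \<alpha> else 0) + (if \<alpha> \<in> A2 then c2 \<alpha> else 0)) * frame_monomial d \<alpha> F)
        = (\<Sum>\<alpha>\<in>A1 \<union> A2. if \<alpha> \<in> A1 then c1 \<alpha> * frame_monomial d \<alpha> F else 0)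
        + (\<Sum>\<alpha>\<in>A1 \<union> A2. if \<alpha> \<in> A2 then c2 \<alpha> * frame_monomial d \<alpha> F else 0)"
      unfolding sum.distrib[symmetric] by (intro sum.cong refl) (auto simp: distrib_right)
    also have "\<dots> = P F + Q F"
      using 1 2 by (simp add: sum.inter_restrict[symmetric] Int_absorb1)
    finally show "P F + Q F = (\<Sum>\<alpha>\<in>A1 \<union> A2.
        ((if \<alpha> \<in> A1 then c1 \<alpha> else 0) + (if \<alpha> \<in> A2 then c2 \<alpha> else 0)) * frame_monomial d \<alpha> F)"
      by simp
  qed (use 1 2 in auto)
qed

lemma frame_monomial_mult:
  "frame_monomial d \<beta> F * frame_monomial d \<gamma> F = frame_monomial d (\<lambda>ij. \<beta> ij + \<gamma> ij) F"
  unfolding frame_monomial_def by (simp add: prod.distrib[symmetric] power_add)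

lemma frame_poly_mult:
  assumes "frame_poly d P" "frame_poly d Q"
  shows "frame_poly d (\<lambda>F. P F * Q F)"
proof -
  obtain c1 A1 where 1: "finite A1" "\<forall>\<alpha>\<in>A1. \<forall>i j. d \<le> i \<longrightarrow> \<alpha> (i, j) = 0"
      "\<And>F. P F = (\<Sum>\<alpha>\<in>A1. c1 \<alpha> * frame_monomial d \<alpha> F)"
    using assms(1) by (elim frame_polyE) blast
  obtain c2 A2 where 2: "finite A2" "\<forall>\<alpha>\<in>A2. \<forall>i j. d \<le> i \<longrightarrow> \<alpha> (i, j) = 0"
      "\<And>F. Q F = (\<Sum>\<alpha>\<in>A2. c2 \<alpha> * frame_monomial d \<alpha> F)"
    using assms(2) by (elim frame_polyE) blast
  define add where "add = (\<lambda>(\<beta> :: nat \<times> 'a \<Rightarrow> nat, \<gamma>). (\<lambda>ij. \<beta> ij + \<gamma> ij))"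
  define coeff where "coeff = (\<lambda>(\<beta>, \<gamma>). c1 \<beta> * c2 \<gamma>)"
  have fin: "finite (A1 \<times> A2)"
    using 1(1) 2(1) by simp
  show ?thesis
  proof (rule frame_polyI[of "add ` (A1 \<times> A2)" _ _ "\<lambda>\<alpha>. \<Sum>p\<in>{p \<in> A1 \<times> A2. add p = \<alpha>}. coeff p"])
    fix F
    have "P F * Q F = (\<Sum>p\<in>A1 \<times> A2. coeff p * frame_monomial d (add p) F)"
      unfolding 1(3) 2(3) sum_product sum.cartesian_product coeff_def add_def
      by (intro sum.cong refl) (auto simp: frame_monomial_mult[symmetric] algebra_simps)
    also have "\<dots> = (\<Sum>\<alpha>\<in>add ` (A1 \<times> A2). \<Sum>p\<in>{p \<in> A1 \<times> A2. add p = \<alpha>}. coeff p * frame_monomial d (add p) F)"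
      by (rule sum.group[symmetric, OF fin finite_imageI[OF fin]]) auto
    also have "\<dots> = (\<Sum>\<alpha>\<in>add ` (A1 \<times> A2). (\<Sum>p\<in>{p \<in> A1 \<times> A2. add p = \<alpha>}. coeff p) * frame_monomial d \<alpha> F)"
      unfolding sum_distrib_right by (intro sum.cong refl) auto
    finally show "P F * Q F = \<dots>" .
  qed (use fin 1(2) 2(2) in \<open>auto simp: add_def\<close>)
qed

lemma frame_poly_diff:
  assumes "frame_poly d P" "frame_poly d Q"
  shows "frame_poly d (\<lambda>F. P F - Q F)"
  using frame_poly_add[OF assms(1) frame_poly_mult[OF frame_poly_const assms(2)], of "-1"] by simp

definition frame_minor :: "4 \<Rightarrow> 4 \<Rightarrow> 4 \<Rightarrow> (nat \<Rightarrow> complex ^ 4) \<Rightarrow> complex" where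
  "frame_minor j k l F =
      F 0 $ j * (F 1 $ k * F 2 $ l - F 1 $ l * F 2 $ k)
    - F 0 $ k * (F 1 $ j * F 2 $ l - F 1 $ l * F 2 $ j)
    + F 0 $ l * (F 1 $ j * F 2 $ k - F 1 $ k * F 2 $ j)"

text \<open>Laplace expansion of the vanishing \<open>4 \<times> 4\<close> determinant with rows \<open>F i, F 0, F 1, F 2\<close>:
  the signed minors are the coefficients of a hyperplane containing the frame.\<close>
lemma frame_minor_cofactor_expansion:
  assumes "i < 3"
  shows "frame_minor 2 3 4 F * F i $ 1 + (- frame_minor 1 3 4 F) * F i $ 2
       + frame_minor 1 2 4 F * F i $ 3 + (- frame_minor 1 2 3 F) * F i $ 4 = 0"
proof -
  have "i = 0 \<or> i = 1 \<or> i = 2"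
    using assms by auto
  then show ?thesis
    unfolding frame_minor_def by (elim disjE) (simp_all add: algebra_simps)
qed

lemma frame_poly_frame_minor: "frame_poly 3 (frame_minor j k l)"
  unfolding frame_minor_def[abs_def]
  by (intro frame_poly_add frame_poly_diff frame_poly_mult frame_poly_entry) simp_all

lemma frame_minor_product_not_identically_zero:
  "\<exists>F. frame_minor 2 3 4 F * frame_minor 1 2 4 F \<noteq> 0"
proof
  define F :: "nat \<Rightarrow> complex ^ 4" where
    "F = (\<lambda>i. if i = 0 then axis 1 1 + axis 3 1 else if i = 1 then axis 2 1 else axis 4 1)"
  show "frame_minor 2 3 4 F * frame_minor 1 2 4 F \<noteq> 0"
    unfolding frame_minor_def F_def by (simp add: axis_def)
qed

section \<open>The example hypersurface\<close>

text \<open>If the function named in a disjunct has order \<open>k\<close>, the corresponding summand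
  \<open>Re z\<^sub>4\<close>, \<open>\<bar>z\<^sub>2\<bar>\<^sup>4\<close> or \<open>\<bar>z\<^sub>1\<^sup>3 - z\<^sub>3 z\<^sub>2\<bar>\<^sup>2\<close> of \<open>r_ex\<close> is bounded below by a multiple
  of \<open>s\<^sup>k\<close>, \<open>s\<^sup>4\<^sup>k\<close> or \<open>s\<^sup>2\<^sup>k\<close> along a suitable ray \<open>t = s \<omega>\<close>.\<close>
definition r_ex_term_order_le :: "nat \<Rightarrow> (complex \<Rightarrow> complex ^ 4) \<Rightarrow> bool" where
  "r_ex_term_order_le N z \<longleftrightarrow>
     (\<exists>k. has_order k (\<lambda>t. z t $ 4) \<and> k \<le> N)
   \<or> (\<exists>k. has_order k (\<lambda>t. z t $ 2) \<and> 4 * k \<le> N)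
   \<or> (\<exists>k. has_order k (\<lambda>t. z t $ 1 ^ 3 - z t $ 3 * z t $ 2) \<and> 2 * k \<le> N)"

lemma r_ex_ge_terms:
  fixes w :: "complex ^ 4"
  assumes "0 \<le> Re (w $ 4)"
  shows "Re (w $ 4) \<le> r_ex w" "(cmod (w $ 1 ^ 3 - w $ 3 * w $ 2))\<^sup>2 \<le> r_ex w" "cmod (w $ 2) ^ 4 \<le> r_ex w"
  using assms unfolding r_ex_def by auto

lemma Delta1_on_r_ex_le:
  assumes "\<And>z m. z \<in> Gamma_in S 0 \<Longrightarrow> curve_order m z \<Longrightarrow> r_ex_term_order_le (N * m) z"
  shows "Delta1_on r_ex S 0 \<le> ereal (real N)"
proof (rule Delta1_on_le_if_ray_lower_bounds)
  fix z m assume z: "z \<in> Gamma_in S 0" and m: "curve_order m z"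
  have "z 0 $ 4 = 0"
    using z unfolding Gamma_in_def by simp
  then obtain \<omega> where \<omega>: "cmod \<omega> = 1" "\<forall>\<^sub>F s in at_right 0. 0 \<le> Re (z (of_real s * \<omega>) $ 4)"
    "\<And>k. has_order k (\<lambda>t. z t $ 4) \<Longrightarrow> ray_lower_bound \<omega> k (\<lambda>t. Re (z t $ 4))"
    using analytic_positive_ray[OF Gamma_in_analytic[OF z]] by metis
  have dominates_re: "\<forall>\<^sub>F s in at_right 0. Re (z (of_real s * \<omega>) $ 4) \<le> r_ex (z (of_real s * \<omega>))"
    using \<omega>(2) by eventually_elim (rule r_ex_ge_terms)
  have dominates_cubic: "\<forall>\<^sub>F s in at_right 0.
      (cmod (z (of_real s * \<omega>) $ 1 ^ 3 - z (of_real s * \<omega>) $ 3 * z (of_real s * \<omega>) $ 2))\<^sup>2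
      \<le> r_ex (z (of_real s * \<omega>))"
    using \<omega>(2) by eventually_elim (rule r_ex_ge_terms)
  have dominates_z2: "\<forall>\<^sub>F s in at_right 0. cmod (z (of_real s * \<omega>) $ 2) ^ 4 \<le> r_ex (z (of_real s * \<omega>))"
    using \<omega>(2) by eventually_elim (rule r_ex_ge_terms)
  from assms[OF z m] have "ray_lower_bound \<omega> (N * m) (\<lambda>t. r_ex (z t))"
    unfolding r_ex_term_order_le_def
  proof (elim disjE exE conjE)
    fix k assume "has_order k (\<lambda>t. z t $ 4)" "k \<le> N * m"
    then show ?thesis
      using ray_lower_bound_mono[OF \<omega>(3) _ dominates_re] by blast
  next
    fix k assume "has_order k (\<lambda>t. z t $ 2)" "4 * k \<le> N * m"
    then show ?thesis
      using ray_lower_bound_mono[OF has_order_ray_lower_bound[OF _ \<omega>(1)] _ dominates_z2]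
      by (simp add: mult.commute)
  next
    fix k assume "has_order k (\<lambda>t. z t $ 1 ^ 3 - z t $ 3 * z t $ 2)" "2 * k \<le> N * m"
    then show ?thesis
      using ray_lower_bound_mono[OF has_order_ray_lower_bound[OF _ \<omega>(1)] _ dominates_cubic]
      by (simp add: mult.commute)
  qed
  with \<omega>(1) show "\<exists>\<omega>. cmod \<omega> = 1 \<and> ray_lower_bound \<omega> (N * m) (\<lambda>t. r_ex (z t))"
    by blast
qed

lemma r_ex_term_order_le_coordinate_hyperplane:
  assumes "z \<in> Gamma_in {w. w $ 3 = 0} 0" "curve_order m z"
  shows "r_ex_term_order_le (6 * m) z"
proof -
  have z3: "\<forall>\<^sub>F t in nhds 0. z t $ 3 = 0"
    using assms(1) unfolding Gamma_in_def by (auto elim: eventually_mono)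
  obtain i where i: "has_order m (\<lambda>t. z t $ i)"
    using assms(2) unfolding curve_order_def by blast
  consider "i = 1" | "i = 2" | "i = 3" | "i = 4"
    using exhaust_4 by blast
  then show ?thesis
  proof cases
    case 1
    have "has_order (3 * m) (\<lambda>t. z t $ 1 ^ 3)"
      using has_order_power[OF i[unfolded 1], where n = 3] .
    moreover have "\<forall>\<^sub>F t in nhds 0. z t $ 1 ^ 3 - z t $ 3 * z t $ 2 = z t $ 1 ^ 3"
      using z3 by eventually_elim simp
    ultimately have "has_order (3 * m) (\<lambda>t. z t $ 1 ^ 3 - z t $ 3 * z t $ 2)"
      by (rule has_order_cong)
    then show ?thesis
      unfolding r_ex_term_order_le_def by force
  next
    case 3
    then show ?thesis
      using i has_order_not_ge_Suc has_order_ge_if_eventually_zero[OF z3] by blast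
  qed (use i in \<open>auto simp: r_ex_term_order_le_def\<close>)
qed

lemma r_ex_term_order_le_generic:
  assumes z: "z \<in> Gamma_in S 0" and m: "curve_order m z"
    and S: "S \<subseteq> {w. a1 * w $ 1 + a2 * w $ 2 + a3 * w $ 3 + a4 * w $ 4 = 0}"
    and "a1 \<noteq> 0" "a3 \<noteq> 0"
  shows "r_ex_term_order_le (8 * m) z"
proof -
  have analytic: "(\<lambda>t. z t $ i) analytic_on {0}" for i
    using z by (rule Gamma_in_analytic)
  have ge: "has_order_ge m (\<lambda>t. z t $ i)" for i
    using m unfolding curve_order_def by blast
  have "\<forall>\<^sub>F t in nhds 0. z t \<in> S"
    using z unfolding Gamma_in_def by blast
  then have z3: "\<forall>\<^sub>F t in nhds 0.
      z t $ 3 = (- a1 / a3) * z t $ 1 + ((- a2 / a3) * z t $ 2 + (- a4 / a3) * z t $ 4)"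
  proof (rule eventually_mono)
    fix t assume "z t \<in> S"
    then have "a1 * z t $ 1 + a2 * z t $ 2 + a3 * z t $ 3 + a4 * z t $ 4 = 0"
      using S by blast
    with \<open>a3 \<noteq> 0\<close> show "z t $ 3 = (- a1 / a3) * z t $ 1 + ((- a2 / a3) * z t $ 2 + (- a4 / a3) * z t $ 4)"
      by (simp add: field_simps) algebra
  qed
  consider (z2) k where "has_order k (\<lambda>t. z t $ 2)" "k \<le> 2 * m"
    | (z4) k where "has_order_ge (Suc (2 * m)) (\<lambda>t. z t $ 2)" "has_order k (\<lambda>t. z t $ 4)" "k \<le> m"
    | (z1) "has_order_ge (Suc (2 * m)) (\<lambda>t. z t $ 2)" "has_order_ge (Suc m) (\<lambda>t. z t $ 4)"
    using analytic_has_order_le_or_ge[OF analytic] by metis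
  then show ?thesis
  proof cases
    case z2
    then show ?thesis
      unfolding r_ex_term_order_le_def by auto
  next
    case z4
    then show ?thesis
      unfolding r_ex_term_order_le_def by auto
  next
    case z1
    have z2_ge: "has_order_ge (Suc m) (\<lambda>t. z t $ 2)"
      using z1(1) by (rule has_order_ge_mono) simp
    have "has_order m (\<lambda>t. z t $ 1)"
    proof (rule ccontr)
      assume "\<not> has_order m (\<lambda>t. z t $ 1)"
      then have z1_ge: "has_order_ge (Suc m) (\<lambda>t. z t $ 1)"
        using analytic_has_order_or_ge_Suc[OF analytic ge] by blast
      have "has_order_ge (Suc m) (\<lambda>t. z t $ 3)"
        by (intro has_order_ge_cong[OF _ z3] has_order_ge_add has_order_ge_cmult z1_ge z2_ge z1(2))
      then have "\<forall>i. has_order_ge (Suc m) (\<lambda>t. z t $ i)"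
        using z1_ge z2_ge z1(2) by (simp add: forall_4)
      with m show False
        using curve_order_not_ge_Suc by blast
    qed
    then have "has_order (3 * m) (\<lambda>t. z t $ 1 ^ 3)"
      by (rule has_order_power)
    moreover have "has_order_ge (Suc (3 * m)) (\<lambda>t. z t $ 3 * z t $ 2)"
      using has_order_ge_mult[OF ge z1(1)] by simp
    ultimately have "has_order (3 * m) (\<lambda>t. z t $ 1 ^ 3 - z t $ 3 * z t $ 2)"
      by (rule has_order_diff_higher)
    then show ?thesis
      unfolding r_ex_term_order_le_def by force
  qed
qed

lemma r_ex_parabola:
  fixes u v :: "complex ^ 4"
  assumes "u $ 1 = 1" "u $ 2 = 0" "u $ 4 = 0" "v $ 1 = 0" "v $ 4 = 0" "u $ 3 * v $ 2 = 1"
  shows "r_ex (t *s u + t\<^sup>2 *s v) = ((cmod (v $ 3 * v $ 2))\<^sup>2 + cmod (v $ 2) ^ 4) * cmod t ^ 8"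
proof -
  have "t ^ 3 - (t * u $ 3 + t\<^sup>2 * v $ 3) * (t\<^sup>2 * v $ 2) = - (v $ 3 * v $ 2) * t ^ 4"
    using assms(6) by algebra
  then show ?thesis
    unfolding r_ex_def using assms(1-5)
    by (simp add: norm_mult norm_power power_mult_distrib algebra_simps flip: power_mult)
qed

lemma Delta1_on_r_ex_ge_6:
  assumes "vec.subspace S" "vec.dim S = 3"
  shows "6 \<le> Delta1_on r_ex S 0"
proof -
  obtain w :: "complex ^ 4" where w: "w \<in> S" "w \<noteq> 0" "\<And>k. k \<noteq> 1 \<Longrightarrow> k \<noteq> 3 \<Longrightarrow> w $ k = 0"
    by (rule subspace_meets_coordinate_plane[OF assms(1), of 1 3]) (simp_all add: assms(2))
  have "r_ex (t *s w + t\<^sup>2 *s 0) = cmod (w $ 1) ^ 6 * cmod t ^ 6" for t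
    using w(3)[of 2] w(3)[of 4] unfolding r_ex_def
    by (simp add: norm_mult norm_power power_mult_distrib flip: power_mult)
  then have "\<forall>\<^sub>F t in nhds 0. \<bar>r_ex (t *s w + t\<^sup>2 *s 0)\<bar> \<le> cmod (w $ 1) ^ 6 * cmod t ^ 6"
    by simp
  then have "ereal (real 6) \<le> Delta1_on r_ex S 0"
    by (rule Delta1_on_ge_if_parabola[OF assms(1) w(1) vec.subspace_0[OF assms(1)] w(2)])
  then show ?thesis
    by simp
qed

lemma Delta1_on_r_ex_ge_8:
  assumes "vec.subspace S" "vec.dim S = 3"
    and S: "S \<subseteq> {w. a1 * w $ 1 + a2 * w $ 2 + a3 * w $ 3 + a4 * w $ 4 = 0}"
    and "a1 \<noteq> 0" "a3 \<noteq> 0"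
  shows "8 \<le> Delta1_on r_ex S 0"
proof -
  obtain w :: "complex ^ 4" where w: "w \<in> S" "w \<noteq> 0" "\<And>k. k \<noteq> 1 \<Longrightarrow> k \<noteq> 3 \<Longrightarrow> w $ k = 0"
    by (rule subspace_meets_coordinate_plane[OF assms(1), of 1 3]) (simp_all add: assms(2))
  obtain w' :: "complex ^ 4" where w': "w' \<in> S" "w' \<noteq> 0" "\<And>k. k \<noteq> 2 \<Longrightarrow> k \<noteq> 3 \<Longrightarrow> w' $ k = 0"
    by (rule subspace_meets_coordinate_plane[OF assms(1), of 2 3]) (simp_all add: assms(2))
  have w24: "w $ 2 = 0" "w $ 4 = 0" and w'14: "w' $ 1 = 0" "w' $ 4 = 0"
    using w(3) w'(3) by simp_all
  have "a1 * w $ 1 + a3 * w $ 3 = 0" "a2 * w' $ 2 + a3 * w' $ 3 = 0"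
    using S w(1) w'(1) w24 w'14 by auto
  moreover have "w $ 1 \<noteq> 0 \<or> w $ 3 \<noteq> 0" "w' $ 2 \<noteq> 0 \<or> w' $ 3 \<noteq> 0"
    using w(2) w'(2) w24 w'14 by (auto simp: vec_eq_iff forall_4)
  ultimately have nonzero: "w $ 1 \<noteq> 0" "w $ 3 \<noteq> 0" "w' $ 2 \<noteq> 0"
    using assms(4,5) by auto
  define u where "u = (1 / w $ 1) *s w"
  define v where "v = (w $ 1 / (w $ 3 * w' $ 2)) *s w'"
  have uv: "u \<in> S" "v \<in> S"
    unfolding u_def v_def using assms(1) w(1) w'(1) by (simp_all add: vec.subspace_scale)
  have "u \<noteq> 0"
    using nonzero unfolding u_def by (auto simp: vec_eq_iff)
  have "r_ex (t *s u + t\<^sup>2 *s v) = ((cmod (v $ 3 * v $ 2))\<^sup>2 + cmod (v $ 2) ^ 4) * cmod t ^ 8" for t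
    by (rule r_ex_parabola) (use nonzero w24 w'14 in \<open>simp_all add: u_def v_def\<close>)
  then have "\<forall>\<^sub>F t in nhds 0.
      \<bar>r_ex (t *s u + t\<^sup>2 *s v)\<bar> \<le> ((cmod (v $ 3 * v $ 2))\<^sup>2 + cmod (v $ 2) ^ 4) * cmod t ^ 8"
    by simp
  then have "ereal (real 8) \<le> Delta1_on r_ex S 0"
    by (rule Delta1_on_ge_if_parabola[OF assms(1) uv \<open>u \<noteq> 0\<close>])
  then show ?thesis
    by simp
qed

lemma Delta1_on_r_ex_span_frame:
  assumes "frame_minor 2 3 4 F * frame_minor 1 2 4 F \<noteq> 0"
    and "inj_on F {..<3}" "vec.independent (F ` {..<3})"
  shows "Delta1_on r_ex ((\<lambda>v. 0 + v) ` vec.span (F ` {..<3})) 0 = 8"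
proof -
  define S where "S = vec.span (F ` {..<3})"
  define H where "H = {w :: complex ^ 4. frame_minor 2 3 4 F * w $ 1 + (- frame_minor 1 3 4 F) * w $ 2
      + frame_minor 1 2 4 F * w $ 3 + (- frame_minor 1 2 3 F) * w $ 4 = 0}"
  have "vec.subspace S"
    unfolding S_def by simp
  have "vec.dim S = 3"
    unfolding S_def using vec.dim_span_eq_card_independent[OF assms(3)] card_image[OF assms(2)] by simp
  have "vec.subspace H"
    unfolding H_def vec.subspace_def by simp algebra
  then have "S \<subseteq> H"
    unfolding S_def H_def using frame_minor_cofactor_expansion by (intro vec.span_minimal) auto
  have "Delta1_on r_ex S 0 \<le> ereal (real 8)"
  proof (rule Delta1_on_r_ex_le)
    fix z m assume "z \<in> Gamma_in S 0" "curve_order m z"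
    then show "r_ex_term_order_le (8 * m) z"
      by (rule r_ex_term_order_le_generic[OF _ _ \<open>S \<subseteq> H\<close>[unfolded H_def]]) (use assms(1) in simp_all)
  qed
  moreover have "8 \<le> Delta1_on r_ex S 0"
    using Delta1_on_r_ex_ge_8[OF \<open>vec.subspace S\<close> \<open>vec.dim S = 3\<close> \<open>S \<subseteq> H\<close>[unfolded H_def]] assms(1)
    by simp
  ultimately show ?thesis
    unfolding S_def by simp
qed

theorem mainTheorem10:
  shows "Delta 2 r_ex 0 = 6
       \<and> generic_value_is 3 (0::complex^4) (\<lambda>S. Delta1_on r_ex S 0) 8
       \<and> Delta 2 r_ex 0 < 8"
proof -
  have "Delta1_on r_ex {w. w $ 3 = 0} 0 \<le> ereal (real 6)"
    by (rule Delta1_on_r_ex_le) (rule r_ex_term_order_le_coordinate_hyperplane)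
  moreover have "{w :: complex ^ 4. w $ 3 = 0} \<in> Gr 3 0"
    unfolding Gr_0_iff dim_coordinate_hyperplane by (simp add: vec.subspace_def)
  moreover have "6 \<le> Delta1_on r_ex S 0" if "S \<in> Gr 3 0" for S
    using that Delta1_on_r_ex_ge_6 unfolding Gr_0_iff by blast
  ultimately have "Delta 2 r_ex (0 :: complex ^ 4) = 6"
    unfolding Delta_def by (auto intro!: antisym INF_lower2 INF_greatest)
  moreover have "generic_value_is 3 (0 :: complex ^ 4) (\<lambda>S. Delta1_on r_ex S 0) 8"
    unfolding generic_value_is_def holds_generically_def
    using frame_poly_mult[OF frame_poly_frame_minor frame_poly_frame_minor]
      frame_minor_product_not_identically_zero Delta1_on_r_ex_span_frame by blast
  ultimately show ?thesis
    by simp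
qed

end
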